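(* There is a set $A\subseteq\mathbb{Z}$ such that (i) for every $n\in\mathbb{Z}$, $n\in A$ or $n+1\in A$ (or both), and (ii) $A\times A$ contains an infinite empty polygon, i.e., there is an infinite set $T\subseteq A\times A$ such that every point of $T$ is a vertex (extreme point) of $\mathrm{conv}(T)$ and $\mathrm{conv}(T)\cap(A\times A)=T$. *)

theory Defs
  imports "HOL-Analysis.Analysis"
begin

definition grid :: "int set \<Rightarrow> (real \<times> real) set" where
  "grid A = {(real_of_int a, real_of_int b) | a b. a \<in> A \<and> b \<in> A}"

end

theory Submission
  imports Defs
begin

text \<open>
  The pairs \<open>p n = (F (2n+3), F (2n+4))\<close> of consecutive Fibonacci numbers lie on the
  hyperbola \<open>y\<^sup>2 - x y - x\<^sup>2 = -1\<close> and approach the line \<open>y = \<phi> x\<close> inside the strip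
  \<open>0 \<le> \<phi> x - y \<le> 1/3\<close>. The quadratic form \<open>y\<^sup>2 - x y - x\<^sup>2\<close> is positive on all
  differences \<open>p m - p n\<close>, so the polar form of \<open>p n\<close> is strictly maximised over the set
  at \<open>p n\<close>, and every \<open>p n\<close> is a vertex of the convex hull.

  Let \<open>A\<close> be the set of rows \<open>b\<close> in which every lattice point of the strip is some \<open>p n\<close>.
  The hull lies in the strip, hence meets \<open>A \<times> A\<close> only in the points \<open>p n\<close>. Lattice
  points of the strip in rows \<open>b\<close> and \<open>b + 1\<close> would give an integer \<open>k\<close> with
  \<open>-4/3 \<le> \<phi> k \<le> -2/3\<close>, so of two consecutive rows at least one meets the strip in no
  lattice point and belongs to \<open>A\<close>. Finally both coordinates of \<open>p n\<close> lie in \<open>A\<close>: row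
  \<open>F (2n+4)\<close> meets the strip in the lattice point \<open>p n\<close> only, and row \<open>F (2n+3)\<close> in none.
\<close>

lemma extreme_point_of_convex_hull_strict_max:
  fixes c p :: "'a::real_inner"
  assumes "p \<in> S" and max: "\<And>q. q \<in> S \<Longrightarrow> q \<noteq> p \<Longrightarrow> c \<bullet> q < c \<bullet> p"
  shows "p extreme_point_of convex hull S"
proof (cases "S - {p} = {}")
  case True
  then have "S = {p}" using \<open>p \<in> S\<close> by auto
  then show ?thesis by simp
next
  case False
  have below: "convex hull (S - {p}) \<subseteq> {x. c \<bullet> x < c \<bullet> p}"
    using max by (intro hull_minimal) (auto simp: convex_halfspace_lt)
  have "c \<bullet> x \<le> c \<bullet> p \<and> (c \<bullet> x = c \<bullet> p \<longrightarrow> x = p)" if "x \<in> convex hull S" for x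
  proof -
    from that have "x \<in> convex hull (insert p (S - {p}))"
      by (simp only: insert_Diff[OF \<open>p \<in> S\<close>])
    then obtain u v b where uv: "0 \<le> u" "0 \<le> v" "u + v = 1"
      and b: "b \<in> convex hull (S - {p})" and x: "x = u *\<^sub>R p + v *\<^sub>R b"
      unfolding convex_hull_insert[OF False] by blast
    have "u = 1 - v" using uv by simp
    have cx: "c \<bullet> x = c \<bullet> p - v * (c \<bullet> p - c \<bullet> b)"
      unfolding x \<open>u = 1 - v\<close> by (simp add: inner_add_right algebra_simps)
    have "c \<bullet> b < c \<bullet> p" using b below by auto
    show ?thesis
    proof (cases "v = 0")
      case True
      then show ?thesis using uv x by simp
    next
      case False
      then have "0 < v * (c \<bullet> p - c \<bullet> b)" using uv \<open>c \<bullet> b < c \<bullet> p\<close> by simp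
      then have "c \<bullet> x < c \<bullet> p" using cx by linarith
      then show ?thesis by simp
    qed
  qed
  then show ?thesis
    using hull_inc[OF \<open>p \<in> S\<close>]
    by (intro extreme_point_of_Int_supporting_hyperplane_le[where a = c and b = "c \<bullet> p"]) auto
qed

definition rows_within :: "(real \<times> real) set \<Rightarrow> (real \<times> real) set \<Rightarrow> int set" where
  "rows_within R T = {b. \<forall>a. (of_int a, of_int b) \<in> R \<longrightarrow> (of_int a, of_int b) \<in> T}"

lemma convex_hull_Int_grid_rows_within:
  assumes "convex R" "T \<subseteq> R"
  shows "convex hull T \<inter> grid (rows_within R T) \<subseteq> T"
proof
  fix z assume z: "z \<in> convex hull T \<inter> grid (rows_within R T)"
  then obtain a b where "z = (of_int a, of_int b)" "b \<in> rows_within R T"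
    by (auto simp: grid_def)
  moreover have "z \<in> R" using z assms hull_minimal by blast
  ultimately show "z \<in> T" by (simp add: rows_within_def)
qed

definition phi :: real where "phi = (1 + sqrt 5) / 2"

lemma phi_squared: "phi\<^sup>2 = phi + 1"
  by (simp add: phi_def power2_eq_square field_simps)

lemma phi_mult_phi: "phi * (phi * x) = phi * x + x"
  using phi_squared by (simp add: power2_eq_square algebra_simps flip: mult.assoc)

lemma phi_bounds: "1.6 < phi" "phi < 1.65"
proof -
  have "2.2 < sqrt 5" by (rule real_less_rsqrt) (simp add: power2_eq_square)
  moreover have "sqrt 5 < 2.3" by (rule real_less_lsqrt) (simp_all add: power2_eq_square)
  ultimately show "1.6 < phi" "phi < 1.65" unfolding phi_def by auto
qed

lemma phi_le_abs_mult_int: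
  fixes k :: int
  assumes "k \<noteq> 0"
  shows "phi \<le> \<bar>phi * of_int k\<bar>"
proof -
  have "1 \<le> \<bar>real_of_int k\<bar>" using assms by linarith
  then have "phi * 1 \<le> phi * \<bar>real_of_int k\<bar>"
    using phi_bounds by (intro mult_left_mono) auto
  then show ?thesis using phi_bounds by (simp add: abs_mult)
qed

definition golden_form :: "real \<times> real \<Rightarrow> real" where
  "golden_form z = (snd z)\<^sup>2 - fst z * snd z - (fst z)\<^sup>2"

definition contracting_coord :: "real \<times> real \<Rightarrow> real" where
  "contracting_coord z = phi * fst z - snd z"

definition expanding_coord :: "real \<times> real \<Rightarrow> real" where
  "expanding_coord z = snd z + (phi - 1) * fst z"

lemma golden_form_factor: "golden_form z = - (contracting_coord z * expanding_coord z)"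
  by (simp add: golden_form_def contracting_coord_def expanding_coord_def power2_eq_square
      algebra_simps phi_mult_phi)

lemma contracting_coord_diff: "contracting_coord (p - q) = contracting_coord p - contracting_coord q"
  by (simp add: contracting_coord_def algebra_simps)

lemma expanding_coord_diff: "expanding_coord (p - q) = expanding_coord p - expanding_coord q"
  by (simp add: expanding_coord_def algebra_simps)

definition golden_polar_vector :: "real \<times> real \<Rightarrow> real \<times> real" where
  "golden_polar_vector p = (- fst p - snd p / 2, snd p - fst p / 2)"

lemma inner_golden_polar_vector:
  "golden_polar_vector p \<bullet> q = (golden_form p + golden_form q - golden_form (q - p)) / 2"
  by (simp add: golden_polar_vector_def golden_form_def inner_prod_def power2_eq_square
      algebra_simps)

definition golden_step :: "'a::comm_semiring_1 \<times> 'a \<Rightarrow> 'a \<times> 'a" where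
  "golden_step z = (fst z + snd z, fst z + 2 * snd z)"

lemma contracting_coord_golden_step:
  "phi\<^sup>2 * contracting_coord (golden_step z) = contracting_coord z"
  by (simp add: contracting_coord_def golden_step_def phi_squared algebra_simps phi_mult_phi)

lemma expanding_coord_golden_step:
  "expanding_coord (golden_step z) = phi\<^sup>2 * expanding_coord z"
  by (simp add: expanding_coord_def golden_step_def phi_squared algebra_simps phi_mult_phi)

text \<open>\<open>golden_pair n = (F (2n+3), F (2n+4))\<close>, as \<open>golden_step\<close> is the square of the
  Fibonacci shift \<open>(x, y) \<mapsto> (y, x + y)\<close>.\<close>

primrec golden_pair :: "nat \<Rightarrow> int \<times> int" where
  "golden_pair 0 = (2, 3)"
| "golden_pair (Suc n) = golden_step (golden_pair n)"

definition golden_point :: "nat \<Rightarrow> real \<times> real" where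
  "golden_point n = map_prod of_int of_int (golden_pair n)"

lemma golden_point_Suc: "golden_point (Suc n) = golden_step (golden_point n)"
  by (simp add: golden_point_def golden_step_def map_prod_def split_beta)

lemma contracting_coord_golden_point:
  "contracting_coord (golden_point n) = (2 * phi - 3) / (phi\<^sup>2) ^ n"
proof (induction n)
  case 0
  then show ?case by (simp add: golden_point_def contracting_coord_def)
next
  case (Suc n)
  have "phi\<^sup>2 * contracting_coord (golden_point (Suc n)) = (2 * phi - 3) / (phi\<^sup>2) ^ n"
    using Suc.IH by (simp add: golden_point_Suc contracting_coord_golden_step)
  moreover have "phi\<^sup>2 \<noteq> 0" using phi_bounds by simp
  ultimately show ?case by (simp add: field_simps)
qed

lemma expanding_coord_golden_point:
  "expanding_coord (golden_point n) = (2 * phi + 1) * (phi\<^sup>2) ^ n"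
proof (induction n)
  case 0
  then show ?case by (simp add: golden_point_def expanding_coord_def)
next
  case (Suc n)
  then show ?case by (simp add: golden_point_Suc expanding_coord_golden_step)
qed

lemma golden_form_golden_point: "golden_form (golden_point n) = -1"
proof -
  have "(2 * phi - 3) * (2 * phi + 1) = 1"
    using phi_squared by (simp add: power2_eq_square algebra_simps)
  moreover have "(phi\<^sup>2) ^ n \<noteq> 0" using phi_bounds by simp
  ultimately show ?thesis
    by (simp add: golden_form_factor contracting_coord_golden_point expanding_coord_golden_point)
qed

lemma contracting_coord_golden_point_bounds:
  "0 < contracting_coord (golden_point n)" "contracting_coord (golden_point n) \<le> 1/3"
proof -
  have pos: "0 < 2 * phi - 3" and small: "2 * phi - 3 \<le> 1/3" using phi_bounds by auto
  have "1 \<le> (phi\<^sup>2) ^ n" using phi_bounds by (simp add: one_le_power)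
  then have "(2 * phi - 3) / (phi\<^sup>2) ^ n \<le> 2 * phi - 3"
    using pos by (simp add: divide_le_eq mult_le_cancel_left1)
  then show "contracting_coord (golden_point n) \<le> 1/3"
    unfolding contracting_coord_golden_point using small by linarith
  show "0 < contracting_coord (golden_point n)"
    using pos by (simp add: contracting_coord_golden_point)
qed

lemma contracting_coord_golden_point_less:
  "m < n \<Longrightarrow> contracting_coord (golden_point n) < contracting_coord (golden_point m)"
  using phi_bounds
  by (auto simp: contracting_coord_golden_point intro!: divide_strict_left_mono power_strict_increasing)

lemma strict_mono_expanding_coord_golden_point:
  "strict_mono (\<lambda>n. expanding_coord (golden_point n))"
  using phi_bounds
  by (auto simp: strict_mono_def expanding_coord_golden_point intro!: power_strict_increasing)

lemma inj_golden_point: "inj golden_point"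
  by (metis injI strict_mono_eq strict_mono_expanding_coord_golden_point)

lemma golden_form_golden_point_diff_pos:
  assumes "m \<noteq> n"
  shows "0 < golden_form (golden_point m - golden_point n)"
proof -
  let ?e = "\<lambda>k. contracting_coord (golden_point k)"
  let ?d = "\<lambda>k. expanding_coord (golden_point k)"
  have "(?e m - ?e n) * (?d m - ?d n) < 0"
    using assms contracting_coord_golden_point_less strict_mono_expanding_coord_golden_point
    by (cases m n rule: linorder_cases) (auto simp: strict_mono_def mult_pos_neg mult_neg_pos)
  then show ?thesis by (simp add: golden_form_factor contracting_coord_diff expanding_coord_diff)
qed

lemma golden_point_extreme_point:
  "golden_point n extreme_point_of convex hull (range golden_point)"
proof (rule extreme_point_of_convex_hull_strict_max[where c = "golden_polar_vector (golden_point n)"])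
  fix q assume "q \<in> range golden_point" "q \<noteq> golden_point n"
  then obtain m where q: "q = golden_point m" and "m \<noteq> n" by auto
  then have "0 < golden_form (q - golden_point n)"
    using golden_form_golden_point_diff_pos by simp
  moreover have "golden_form 0 = 0" by (simp add: golden_form_def)
  ultimately show "golden_polar_vector (golden_point n) \<bullet> q
      < golden_polar_vector (golden_point n) \<bullet> golden_point n"
    by (simp add: inner_golden_polar_vector q golden_form_golden_point)
qed simp

definition golden_strip :: "(real \<times> real) set" where
  "golden_strip = {z. 0 \<le> contracting_coord z \<and> contracting_coord z \<le> 1/3}"

lemma convex_golden_strip: "convex golden_strip"
proof -
  have "golden_strip = {z. (phi, -1) \<bullet> z \<ge> 0} \<inter> {z. (phi, -1) \<bullet> z \<le> 1/3}"
    by (auto simp: golden_strip_def contracting_coord_def inner_prod_def)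
  then show ?thesis by (metis convex_Int convex_halfspace_ge convex_halfspace_le)
qed

lemma golden_point_in_golden_strip: "golden_point n \<in> golden_strip"
  using contracting_coord_golden_point_bounds by (simp add: golden_strip_def less_imp_le)

lemma golden_strip_row_unique:
  assumes "(of_int a, of_int b) \<in> golden_strip" "(of_int a', of_int b) \<in> golden_strip"
  shows "a = a'"
proof (rule ccontr)
  assume "a \<noteq> a'"
  have "phi * of_int (a - a') =
      contracting_coord (of_int a, of_int b) - contracting_coord (of_int a', of_int b)"
    by (simp add: contracting_coord_def algebra_simps)
  then have "\<bar>phi * of_int (a - a')\<bar> \<le> 1/3"
    using assms unfolding abs_le_iff by (auto simp: golden_strip_def)
  moreover have "phi \<le> \<bar>phi * of_int (a - a')\<bar>"
    using \<open>a \<noteq> a'\<close> by (intro phi_le_abs_mult_int) simp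
  ultimately show False using phi_bounds by linarith
qed

lemma golden_strip_consecutive_rows:
  assumes "(of_int a, of_int b) \<in> golden_strip"
  shows "(of_int a', of_int (b + 1)) \<notin> golden_strip"
proof
  assume a': "(of_int a', of_int (b + 1)) \<in> golden_strip"
  have "phi * of_int (a - a') + 1 =
      contracting_coord (of_int a, of_int b) - contracting_coord (of_int a', of_int (b + 1))"
    by (simp add: contracting_coord_def algebra_simps)
  then have "-4/3 \<le> phi * of_int (a - a')" "phi * of_int (a - a') \<le> -2/3"
    using assms a' by (auto simp: golden_strip_def)
  moreover from calculation have "a - a' \<noteq> 0" by auto
  then have "phi \<le> \<bar>phi * of_int (a - a')\<bar>" by (rule phi_le_abs_mult_int)
  ultimately show False using phi_bounds unfolding abs_le_iff by linarith
qed

lemma golden_strip_row_empty: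
  assumes "(of_int x, of_int y) \<in> golden_strip" "0 < contracting_coord (of_int x, of_int y)"
  shows "(of_int a, of_int x) \<notin> golden_strip"
proof
  assume a: "(of_int a, of_int x) \<in> golden_strip"
  define k where "k = a - y + x"
  have eq: "contracting_coord (of_int a, of_int x) =
      phi * (of_int k - contracting_coord (of_int x, of_int y))"
    by (simp add: k_def contracting_coord_def algebra_simps phi_mult_phi)
  consider "k \<le> 0" | "1 \<le> k" by linarith
  then show False
  proof cases
    case 1
    then have "phi * (of_int k - contracting_coord (of_int x, of_int y)) < 0"
      using assms(2) phi_bounds by (intro mult_pos_neg) auto
    then show False using a eq by (simp add: golden_strip_def)
  next
    case 2
    then have "2/3 \<le> of_int k - contracting_coord (of_int x, of_int y)"
      using assms(1) by (simp add: golden_strip_def)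
    then have "phi * (2/3) \<le> phi * (of_int k - contracting_coord (of_int x, of_int y))"
      using phi_bounds by (intro mult_left_mono) auto
    moreover have "contracting_coord (of_int a, of_int x) \<le> 1/3"
      using a by (simp add: golden_strip_def)
    ultimately show False using eq phi_bounds by linarith
  qed
qed

lemma rows_within_golden_strip_consecutive:
  "n \<in> rows_within golden_strip T \<or> n + 1 \<in> rows_within golden_strip T"
  using golden_strip_consecutive_rows by (auto simp: rows_within_def)

lemma range_golden_point_subset_grid:
  "range golden_point \<subseteq> grid (rows_within golden_strip (range golden_point))"
proof
  fix z assume "z \<in> range golden_point"
  then obtain n where n: "z = golden_point n" by auto
  then obtain x y where z: "z = (of_int x, of_int y)" "0 < contracting_coord z"
    using contracting_coord_golden_point_bounds by (simp add: golden_point_def prod_eq_iff)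
  have strip: "(of_int x, of_int y) \<in> golden_strip"
    using golden_point_in_golden_strip n z by simp
  have "y \<in> rows_within golden_strip (range golden_point)"
    using golden_strip_row_unique[OF _ strip] \<open>z \<in> range golden_point\<close> z
    by (auto simp: rows_within_def)
  moreover have "x \<in> rows_within golden_strip (range golden_point)"
    using golden_strip_row_empty[OF strip] z by (auto simp: rows_within_def)
  ultimately show "z \<in> grid (rows_within golden_strip (range golden_point))"
    by (auto simp: grid_def z)
qed

theorem proposition9:
  shows "\<exists>A :: int set. (\<forall>n. n \<in> A \<or> n + 1 \<in> A) \<and>
     (\<exists>T. T \<subseteq> grid A \<and> infinite T \<and>
          (\<forall>x\<in>T. x extreme_point_of (convex hull T)) \<and>
          convex hull T \<inter> grid A = T)"
proof -
  define T where "T = range golden_point"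
  define A where "A = rows_within golden_strip T"
  have T_grid: "T \<subseteq> grid A"
    using range_golden_point_subset_grid by (simp add: A_def T_def)
  have "T \<subseteq> golden_strip" using golden_point_in_golden_strip by (auto simp: T_def)
  then have "convex hull T \<inter> grid A \<subseteq> T"
    unfolding A_def using convex_golden_strip by (intro convex_hull_Int_grid_rows_within)
  then have "convex hull T \<inter> grid A = T" using T_grid hull_subset[of T convex] by blast
  moreover have "\<forall>n. n \<in> A \<or> n + 1 \<in> A"
    using rows_within_golden_strip_consecutive by (simp add: A_def)
  moreover have "infinite T" using inj_golden_point range_inj_infinite by (simp add: T_def)
  moreover have "\<forall>x\<in>T. x extreme_point_of convex hull T"
    using golden_point_extreme_point by (simp add: T_def)
  ultimately show ?thesis using T_grid by blast
qed

end
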